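(* Let $V$ be a vector space of countably infinite dimension over a field $\mathbb{F}$ and $u$ an endomorphism of $V$. Assume that $V^u=V_1\oplus V_2$ (direct sum of submodules), where $V_1$ is a non-zero free monogenous $\mathbb{F}[t]$-module and $u$ induces a scalar multiple of the identity on $V_2$. Let $x$ be a generator of $V_1$ and $a\in\mathbb{F}$. Then there exists an endomorphism $v$ of $V$ such that $v^2=av$ and, setting $u':=u-v$, one has $V=\operatorname{Span}\bigl((u')^k(x)\bigr)_{k\in\mathbb{N}}$.
   Context: $V^u$ is the $\mathbb{F}[t]$-module with underlying space $V$ and $t\cdot x:=u(x)$; a module is monogenous if it is generated by one element. *)

theory Defs
  imports Complex_Main "HOL-Library.Countable_Set"
begin

definition orbit_span :: "('f::field \<Rightarrow> 'v::ab_group_add \<Rightarrow> 'v) \<Rightarrow> ('v \<Rightarrow> 'v) \<Rightarrow> 'v \<Rightarrow> 'v set" where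
  "orbit_span scale u x = module.span scale (range (\<lambda>k. (u ^^ k) x))"

text \<open>W is a free monogenous F[t]-submodule of V^u: there is y with W = F[t] y and
  p(u) y = 0 only for p = 0, i.e. the vectors u^k y (k in N) are pairwise distinct and
  linearly independent.\<close>
definition free_monogenous :: "('f::field \<Rightarrow> 'v::ab_group_add \<Rightarrow> 'v) \<Rightarrow> ('v \<Rightarrow> 'v) \<Rightarrow> 'v set \<Rightarrow> bool" where
  "free_monogenous scale u W \<longleftrightarrow>
     (\<exists>y. W = orbit_span scale u y \<and> inj (\<lambda>k. (u ^^ k) y)
          \<and> \<not> module.dependent scale (range (\<lambda>k. (u ^^ k) y)))"

end

theory Submission
  imports Defs
begin

text \<open>The orbit of the free generator y lies in the span of the orbit of x, so the vectors
  e k = u^k x form a basis of V1: a linear dependence would make V1 finite-dimensional. V2 has a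
  countable basis f m (m in I), on which u is the scalar c. On the block e 2m, e (2m+1), f m let v
  have rank one, with image spanned by f m - e (2m+1), on which it acts by a, and be chosen so
  that u - v maps e 2m to f m. Then v^2 = a v, and the (u - v)-orbit of x successively reaches
  e 2m, f m, e (2m+1), e (2m+2), hence a whole basis.\<close>

context vector_space
begin

lemma span_finite_subset: "x \<in> span S \<Longrightarrow> \<exists>F. finite F \<and> F \<subseteq> S \<and> x \<in> span F"
proof -
  assume "x \<in> span S"
  then obtain F r where F: "finite F" "F \<subseteq> S" "x = (\<Sum>a\<in>F. r a *s a)"
    unfolding span_explicit by blast
  have "x \<in> span F" unfolding F(3) by (intro span_sum span_scale span_base)
  with F show ?thesis by blast
qed

lemma countable_independent:
  assumes B: "countable B" "span B = UNIV" and T: "independent T"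
  shows "countable T"
proof -
  have "T \<subseteq> (\<Union>F\<in>{F. finite F \<and> F \<subseteq> B}. T \<inter> span F)"
  proof
    fix t assume "t \<in> T"
    obtain F where "finite F" "F \<subseteq> B" "t \<in> span F"
      using span_finite_subset[of t B] B(2) by auto
    with \<open>t \<in> T\<close> show "t \<in> (\<Union>F\<in>{F. finite F \<and> F \<subseteq> B}. T \<inter> span F)"
      by blast
  qed
  moreover have "countable (\<Union>F\<in>{F. finite F \<and> F \<subseteq> B}. T \<inter> span F)"
  proof (rule countable_UN)
    show "countable {F. finite F \<and> F \<subseteq> B}"
      using B(1) by (rule countable_Collect_finite_subset)
    fix F assume "F \<in> {F. finite F \<and> F \<subseteq> B}"
    then have "finite (T \<inter> span F)"
      using independent_span_bound[of F "T \<inter> span F"] independent_mono[OF T] by auto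
    then show "countable (T \<inter> span F)"
      by (rule countable_finite)
  qed
  ultimately show ?thesis
    by (rule countable_subset)
qed

lemma independent_Un_span_Int_zero:
  assumes A: "independent A" and B: "independent B" and AB: "span A \<inter> span B = {0}"
  shows "independent (A \<union> B)"
proof -
  have not_dependent_at: "a \<notin> span (A \<union> B - {a})"
    if A: "independent A" and AB: "span A \<inter> span B = {0}" and a: "a \<in> A" for A B a
  proof
    assume "a \<in> span (A \<union> B - {a})"
    moreover have "span (A \<union> B - {a}) \<subseteq> span ((A - {a}) \<union> B)"
      by (rule span_mono) blast
    ultimately have "a \<in> span ((A - {a}) \<union> B)" by blast
    then obtain p q where pq: "a = p + q" "p \<in> span (A - {a})" "q \<in> span B"
      unfolding span_Un by blast
    have "p \<in> span A"
      using pq(2) span_mono[of "A - {a}" A] by blast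
    then have "a - p \<in> span A"
      by (rule span_diff[OF span_base[OF a]])
    moreover have "a - p = q"
      using pq(1) by simp
    ultimately have "q = 0"
      using pq(3) AB by blast
    then have "a \<in> span (A - {a})" using pq by simp
    then show False using A a unfolding dependent_def by blast
  qed
  moreover have "a \<notin> span (A \<union> B - {a})" if "a \<in> B" for a
    using not_dependent_at[OF B _ that, of A] AB by (simp add: Un_commute Int_commute)
  ultimately show ?thesis
    unfolding dependent_def using not_dependent_at[OF A AB] by blast
qed

lemma orbit_span_least:
  assumes "subspace W" "x \<in> W" "u ` W \<subseteq> W"
  shows "orbit_span scale u x \<subseteq> W"
proof -
  have "(u ^^ k) x \<in> W" for k
    by (induction k) (use assms in auto)
  then show ?thesis
    unfolding orbit_span_def using assms(1) by (intro span_minimal) auto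
qed

lemma orbit_span_invariant:
  assumes "Vector_Spaces.linear scale scale u"
  shows "u ` orbit_span scale u x \<subseteq> orbit_span scale u x"
proof -
  interpret vp: vector_space_pair scale scale ..
  have "u ` range (\<lambda>k. (u ^^ k) x) = range (\<lambda>k. (u ^^ Suc k) x)"
    by (simp add: image_image)
  then have "u ` range (\<lambda>k. (u ^^ k) x) \<subseteq> range (\<lambda>k. (u ^^ k) x)"
    by blast
  then show ?thesis
    unfolding orbit_span_def vp.linear_span_image[OF assms, symmetric] by (rule span_mono)
qed

lemma orbit_in_orbit_span: "(u ^^ k) x \<in> orbit_span scale u x"
  unfolding orbit_span_def by (rule span_base) blast

lemma independent_orbit:
  assumes lin: "Vector_Spaces.linear scale scale u"
    and T: "independent T" "infinite T" "T \<subseteq> orbit_span scale u x"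
  shows "inj (\<lambda>k. (u ^^ k) x) \<and> independent (range (\<lambda>k. (u ^^ k) x))"
proof -
  interpret vp: vector_space_pair scale scale ..
  define e where "e k = (u ^^ k) x" for k
  have e_0: "e 0 = x" and e_Suc: "u (e k) = e (Suc k)" for k
    by (simp_all add: e_def)
  have new: "e n \<notin> span (e ` {..<n})" for n
  proof
    let ?P = "span (e ` {..<n})"
    assume en: "e n \<in> ?P"
    have "u (e k) \<in> ?P" if "k < n" for k
    proof (cases "Suc k = n")
      case True
      then show ?thesis using en by (simp add: e_Suc)
    next
      case False
      with that have "Suc k < n" by simp
      then show ?thesis unfolding e_Suc by (intro span_base imageI) simp
    qed
    then have "u ` ?P \<subseteq> ?P"
      unfolding vp.linear_span_image[OF lin, symmetric] by (intro span_minimal) auto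
    moreover have "e 0 \<in> ?P"
    proof (cases n)
      case 0
      then show ?thesis using en by simp
    next
      case (Suc m)
      then show ?thesis by (intro span_base imageI) simp
    qed
    ultimately have "orbit_span scale u x \<subseteq> ?P"
      unfolding e_0 by (intro orbit_span_least subspace_span)
    then have "finite T"
      using independent_span_bound[OF _ T(1)] T(3) by blast
    with T(2) show False ..
  qed
  have "inj e"
  proof (rule injI, rule ccontr)
    fix i j assume "e i = e j" "i \<noteq> j"
    then have "e (max i j) = e (min i j)" "min i j < max i j"
      by (auto simp: max_def min_def)
    then have "e (max i j) \<in> span (e ` {..<max i j})"
      by (intro span_base) auto
    with new[of "max i j"] show False ..
  qed
  have prefixes: "independent (e ` {..<n})" for n
  proof (induction n)
    case (Suc n)
    then show ?case
      using independent_insertI[OF new] by (simp add: lessThan_Suc)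
  qed (simp add: independent_empty)
  have "e ` {..<m} \<subseteq> e ` {..<n} \<or> e ` {..<n} \<subseteq> e ` {..<m}" for m n
    using nat_le_linear[of m n] by (auto intro!: image_mono)
  then have "independent (\<Union>n. e ` {..<n})"
    using prefixes by (intro independent_Union_directed) blast+
  also have "(\<Union>n. e ` {..<n}) = range e"
    by blast
  finally show ?thesis
    using \<open>inj e\<close> unfolding e_def by simp
qed

lemma exists_complement_basis:
  assumes V1: "V1 = span E" "independent E" and V2: "subspace V2"
    and direct: "V1 \<inter> V2 = {0}" "{y + z | y z. y \<in> V1 \<and> z \<in> V2} = UNIV"
    and B: "countable B" "span B = UNIV"
  obtains f and I :: "nat set" where "inj_on f I" "f ` I \<subseteq> V2" "E \<inter> f ` I = {}"
    "independent (E \<union> f ` I)" "span (E \<union> f ` I) = UNIV"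
proof -
  obtain C where C: "C \<subseteq> V2" "independent C" "V2 \<subseteq> span C"
    by (meson basis_exists)
  have span_C: "span C = V2"
    using C V2 span_minimal[of C V2] by blast
  obtain f and I :: "nat set" where f: "C = f ` I" "inj_on f I"
    using countable_independent[OF B C(2)] unfolding countable_as_injective_image_subset by blast
  have "E \<subseteq> V1"
    unfolding V1(1) by (rule span_superset)
  then have "E \<inter> C \<subseteq> {0}"
    using C(1) direct(1) by blast
  moreover have "0 \<notin> E"
    using V1(2) dependent_zero by blast
  ultimately have "E \<inter> C = {}"
    by blast
  moreover have "independent (E \<union> C)"
    using independent_Un_span_Int_zero[OF V1(2) C(2)] V1(1) span_C direct(1) by simp
  moreover have "span (E \<union> C) = UNIV"
    using direct(2) V1(1) span_C by (simp add: span_Un)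
  ultimately show ?thesis
    using that f C(1) by blast
qed

end

locale shift_plus_scalar_basis = vector_space scale
  for scale :: "'f::field \<Rightarrow> 'v::ab_group_add \<Rightarrow> 'v" (infixr \<open>*s\<close> 75) +
  fixes u :: "'v \<Rightarrow> 'v" and e f :: "nat \<Rightarrow> 'v" and I :: "nat set" and c :: 'f
  assumes linear_u: "Vector_Spaces.linear scale scale u"
    and independent_basis: "independent (range e \<union> f ` I)"
    and span_basis: "span (range e \<union> f ` I) = UNIV"
    and inj_e: "inj e" and inj_on_f: "inj_on f I"
    and disjoint_basis: "range e \<inter> f ` I = {}"
    and u_e: "u (e k) = e (Suc k)"
    and u_f: "m \<in> I \<Longrightarrow> u (f m) = c *s f m"
begin

definition eigen :: "nat \<Rightarrow> 'v" where
  "eigen m = f m - e (Suc (2 * m))"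

text \<open>The coefficient -1 makes (u - v) (e 2m) = f m, and 1 - a makes v (eigen m) = a eigen m.
  On blocks with m \<notin> I (possible when V2 is finite-dimensional) v vanishes.\<close>

definition correction :: "'f \<Rightarrow> ('v \<Rightarrow> 'v) \<Rightarrow> bool" where
  "correction a v \<longleftrightarrow> Vector_Spaces.linear scale scale v
     \<and> (\<forall>k. v (e k) = (if k div 2 \<in> I
                        then (if even k then - 1 else 1 - a) *s eigen (k div 2) else 0))
     \<and> (\<forall>m\<in>I. v (f m) = eigen m)"

lemma correction_exists: "\<exists>v. correction a v"
proof -
  interpret vp: vector_space_pair scale scale ..
  define g where "g z = (if z \<in> f ` I then eigen (the_inv_into I f z)
    else (let k = inv e z in
          if k div 2 \<in> I then (if even k then - 1 else 1 - a) *s eigen (k div 2) else 0))" for z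
  define v where "v = vp.construct (range e \<union> f ` I) g"
  have v_basis: "v z = g z" if "z \<in> range e \<union> f ` I" for z
    unfolding v_def using vp.construct_basis[OF independent_basis that] .
  have "e k \<notin> f ` I" for k
    using disjoint_basis by blast
  then have "v (e k) = (if k div 2 \<in> I
                        then (if even k then - 1 else 1 - a) *s eigen (k div 2) else 0)" for k
    using v_basis[of "e k"] by (simp add: g_def inv_f_f[OF inj_e])
  moreover have "v (f m) = eigen m" if "m \<in> I" for m
    using v_basis[of "f m"] that by (simp add: g_def the_inv_into_f_f[OF inj_on_f])
  ultimately have "correction a v"
    unfolding correction_def using vp.linear_construct[OF independent_basis, of g] v_def by blast
  then show ?thesis by blast
qed

lemma correction_quadratic:
  assumes v: "correction a v"
  shows "v (v z) = a *s v z"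
proof -
  interpret vp: vector_space_pair scale scale ..
  have lin: "Vector_Spaces.linear scale scale v"
    using v by (simp add: correction_def)
  have v_eigen: "v (eigen m) = a *s eigen m" if "m \<in> I" for m
  proof -
    have "v (eigen m) = eigen m - (1 - a) *s eigen m"
      using v that vp.linear_diff[OF lin] by (simp add: correction_def eigen_def)
    then show ?thesis by (simp add: scale_left_diff_distrib)
  qed
  have "v (v b) = a *s v b" if "b \<in> range e \<union> f ` I" for b
    using that v v_eigen vp.linear_scale[OF lin] vp.linear_0[OF lin]
    by (auto simp: correction_def mult.commute)
  moreover have "Vector_Spaces.linear scale scale (\<lambda>z. v (v z))"
    "Vector_Spaces.linear scale scale (\<lambda>z. a *s v z)"
    using Vector_Spaces.linear_compose[OF lin lin]
      Vector_Spaces.linear_compose[OF lin linear_scale_self]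
    by (simp_all add: comp_def)
  ultimately show ?thesis
    using vp.linear_eq_on[of "\<lambda>z. v (v z)" "\<lambda>z. a *s v z"] span_basis by blast
qed

lemma correction_orbit_span:
  assumes v: "correction a v"
  shows "orbit_span scale (\<lambda>z. u z - v z) (e 0) = UNIV"
proof -
  interpret vp: vector_space_pair scale scale ..
  define u' where "u' z = u z - v z" for z
  have "Vector_Spaces.linear scale scale u'"
    unfolding u'_def using v vp.linear_compose_sub[OF linear_u] by (simp add: correction_def)
  define W where "W = orbit_span scale u' (e 0)"
  have W: "subspace W"
    unfolding W_def orbit_span_def by (rule subspace_span)
  have u'_W: "u' z \<in> W" if "z \<in> W" for z
    using orbit_span_invariant[OF \<open>Vector_Spaces.linear scale scale u'\<close>] that
    unfolding W_def by blast
  have u'_e: "u' (e k) = e (Suc k) - v (e k)" for k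
    by (simp add: u'_def u_e)
  have block: "e (Suc (2 * m)) \<in> W \<and> (m \<in> I \<longrightarrow> f m \<in> W) \<and> e (2 * Suc m) \<in> W"
    if e_even: "e (2 * m) \<in> W" for m
  proof (cases "m \<in> I")
    case True
    have v_e_even: "v (e (2 * m)) = - eigen m"
      and v_e_odd: "v (e (Suc (2 * m))) = (1 - a) *s eigen m"
      using v True by (simp_all add: correction_def)
    have "f m = u' (e (2 * m))"
      by (simp add: u'_e v_e_even eigen_def)
    then have f_W: "f m \<in> W"
      using u'_W e_even by simp
    have "eigen m = c *s f m - u' (f m)"
      using v True by (simp add: u'_def u_f correction_def)
    then have eigen_W: "eigen m \<in> W"
      using W f_W u'_W by (simp add: subspace_diff subspace_scale)
    have "e (Suc (2 * m)) = f m - eigen m"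
      by (simp add: eigen_def)
    then have e_odd_W: "e (Suc (2 * m)) \<in> W"
      using W f_W eigen_W by (simp add: subspace_diff)
    have "e (2 * Suc m) = u' (e (Suc (2 * m))) + (1 - a) *s eigen m"
      by (simp add: u'_e v_e_odd)
    then have "e (2 * Suc m) \<in> W"
      using W u'_W e_odd_W eigen_W by (simp add: subspace_add subspace_scale)
    with f_W e_odd_W show ?thesis by blast
  next
    case False
    then have "v (e (2 * m)) = 0" "v (e (Suc (2 * m))) = 0"
      using v by (simp_all add: correction_def)
    then have "e (Suc (2 * m)) = u' (e (2 * m))" "e (2 * Suc m) = u' (e (Suc (2 * m)))"
      by (simp_all add: u'_e)
    then show ?thesis
      using u'_W e_even False by simp
  qed
  have e_even_W: "e (2 * m) \<in> W" for m
  proof (induction m)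
    case 0
    show ?case
      using orbit_in_orbit_span[where u = u' and k = 0 and x = "e 0"] by (simp add: W_def)
  next
    case (Suc m)
    then show ?case using block by blast
  qed
  have "e k \<in> W" for k
    using e_even_W[of "k div 2"] block[OF e_even_W, of "k div 2"]
    by (cases "even k") (auto elim!: evenE oddE)
  moreover have "f m \<in> W" if "m \<in> I" for m
    using block[OF e_even_W] that by blast
  ultimately have "span (range e \<union> f ` I) \<subseteq> W"
    using W by (intro span_minimal) auto
  then show ?thesis
    unfolding span_basis W_def u'_def by blast
qed

end

theorem lemma9:
  fixes scale :: "'f::field \<Rightarrow> 'v::ab_group_add \<Rightarrow> 'v"
    and u :: "'v \<Rightarrow> 'v" and V1 V2 :: "'v set" and x :: 'v and a :: 'f
  assumes vs: "vector_space scale"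
    and dim: "\<exists>B. \<not> module.dependent scale B \<and> module.span scale B = UNIV
                  \<and> countable B \<and> infinite B"
    and u_lin: "Vector_Spaces.linear scale scale u"
    and sub1: "module.subspace scale V1" and sub2: "module.subspace scale V2"
    and inv1: "u ` V1 \<subseteq> V1" and inv2: "u ` V2 \<subseteq> V2"
    and dsum: "V1 \<inter> V2 = {0}" and dsum2: "{y + z | y z. y \<in> V1 \<and> z \<in> V2} = UNIV"
    and nz: "V1 \<noteq> {0}"
    and free: "free_monogenous scale u V1"
    and scalar: "\<exists>c. \<forall>z\<in>V2. u z = scale c z"
    and gen: "orbit_span scale u x = V1"
  shows "\<exists>v. Vector_Spaces.linear scale scale v
             \<and> (\<forall>z. v (v z) = scale a (v z))
             \<and> orbit_span scale (\<lambda>z. u z - v z) x = UNIV"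
proof -
  interpret vector_space scale by (rule vs)
  obtain c where c: "\<And>z. z \<in> V2 \<Longrightarrow> u z = scale c z"
    using scalar by blast
  obtain y where y: "V1 = orbit_span scale u y" "inj (\<lambda>k. (u ^^ k) y)"
      "independent (range (\<lambda>k. (u ^^ k) y))"
    using free unfolding free_monogenous_def by blast
  obtain B where B: "countable B" "span B = UNIV"
    using dim by blast
  define e where "e k = (u ^^ k) x" for k
  have "range (\<lambda>k. (u ^^ k) y) \<subseteq> orbit_span scale u x"
    using gen y(1) orbit_in_orbit_span by blast
  then have e: "inj e" "independent (range e)"
    using independent_orbit[OF u_lin y(3)] y(2) unfolding e_def by (simp_all add: finite_image_iff)
  have V1: "V1 = span (range e)"
    using gen unfolding orbit_span_def e_def by simp
  obtain f and I :: "nat set" where f: "inj_on f I" "f ` I \<subseteq> V2" "range e \<inter> f ` I = {}"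
      "independent (range e \<union> f ` I)" "span (range e \<union> f ` I) = UNIV"
    by (rule exists_complement_basis[OF V1 e(2) sub2 dsum dsum2 B])
  have "u (e k) = e (Suc k)" for k
    by (simp add: e_def)
  moreover have "u (f m) = scale c (f m)" if "m \<in> I" for m
    using c f(2) that by blast
  ultimately interpret shift_plus_scalar_basis scale u e f I c
    using u_lin f e(1)
    by (intro shift_plus_scalar_basis.intro[OF vs] shift_plus_scalar_basis_axioms.intro)
  obtain v where v: "correction a v"
    using correction_exists by blast
  then have "Vector_Spaces.linear scale scale v"
    by (simp add: correction_def)
  moreover have "e 0 = x"
    by (simp add: e_def)
  ultimately show ?thesis
    using correction_quadratic[OF v] correction_orbit_span[OF v] by auto
qed

end
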